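(* Every twofold partition having a representation in Model $F^{\underline u}$ has a representation in Model $F^{u}$, and there exist a finite product set $X$ and a (linear) twofold partition of $X$ satisfying the standing assumptions that has a representation in Model $F^{u}$ but none in Model $F^{\underline u}$.
   Context: Setting. $N=\{1,\dots,n\}$, $n\ge2$; $X=X_1\times\dots\times X_n$, each $X_i$ finite. $(y_i,x_{-i})$ denotes $x$ with $i$-th coordinate replaced by $y_i$. A twofold partition $\langle\mathcal A,\mathcal U\rangle$ of $X$: disjoint sets with union $X$. Define $x_i\succsim_i y_i$ iff [for all $a_{-i}\in\prod_{j\ne i}X_j$, $(y_i,a_{-i})\in\mathcal A\Rightarrow(x_i,a_{-i})\in\mathcal A$]. Standing assumptions: every attribute is influential (exist $x_i,y_i,a_{-i}$ with $(x_i,a_{-i})\in\mathcal A$, $(y_i,a_{-i})\in\mathcal U$) and each $\succsim_i$ is antisymmetric. $x\succsim y$ iff $x_i\succsim_i y_i$ for all $i$. Model $F^{u}$: there are semiorders $S_i$ on $X_i$ (reflexive, Ferrers: $xS_iy, zS_iw\Rightarrow xS_iw$ or $zS_iy$; semitransitive: $xS_iy, yS_iz\Rightarrow xS_iw$ or $wS_iz$), the relation $S$ on $X$ given by $xSy$ iff $x_iS_iy_i$ for all $i\in N$ with asymmetric part $P$, and a set $\mathcal P\subseteq X$ with no $p,q\in\mathcal P$ satisfying $pPq$, such that for all $x$: $x\in\mathcal U$ iff [$pPx$ for some $p\in\mathcal P$ and not $xPq$ for all $q\in\mathcal P$]. Model $F^{\underline u}$: Model $F^{u}$ with a representation in which $S_i=\succsim_i$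 for all $i$. *)

theory Defs
  imports "HOL-Library.FuncSet"
begin

text \<open>A twofold partition is given by its first class A (a subset of X); U = X - A.\<close>

definition prodX :: "nat \<Rightarrow> (nat \<Rightarrow> 'a set) \<Rightarrow> (nat \<Rightarrow> 'a) set" where
  "prodX n Xs = PiE {1..n} Xs"

definition others :: "nat \<Rightarrow> (nat \<Rightarrow> 'a set) \<Rightarrow> nat \<Rightarrow> (nat \<Rightarrow> 'a) set" where
  "others n Xs i = PiE ({1..n} - {i}) Xs"

definition pref :: "nat \<Rightarrow> (nat \<Rightarrow> 'a set) \<Rightarrow> (nat \<Rightarrow> 'a) set \<Rightarrow> nat \<Rightarrow> 'a \<Rightarrow> 'a \<Rightarrow> bool" where
  "pref n Xs A i xi yi \<longleftrightarrow>
     (\<forall>a \<in> others n Xs i. a(i := yi) \<in> A \<longrightarrow> a(i := xi) \<in> A)"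

definition twofold_partition :: "nat \<Rightarrow> (nat \<Rightarrow> 'a set) \<Rightarrow> (nat \<Rightarrow> 'a) set \<Rightarrow> bool" where
  "twofold_partition n Xs A \<longleftrightarrow> A \<subseteq> prodX n Xs"

definition standing :: "nat \<Rightarrow> (nat \<Rightarrow> 'a set) \<Rightarrow> (nat \<Rightarrow> 'a) set \<Rightarrow> bool" where
  "standing n Xs A \<longleftrightarrow>
     n \<ge> 2 \<and> (\<forall>i\<in>{1..n}. finite (Xs i)) \<and> twofold_partition n Xs A \<and>
     (\<forall>i\<in>{1..n}. \<exists>xi\<in>Xs i. \<exists>yi\<in>Xs i. \<exists>a\<in>others n Xs i.
         a(i := xi) \<in> A \<and> a(i := yi) \<notin> A) \<and>
     (\<forall>i\<in>{1..n}. \<forall>xi\<in>Xs i. \<forall>yi\<in>Xs i.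
         pref n Xs A i xi yi \<and> pref n Xs A i yi xi \<longrightarrow> xi = yi)"

definition linear_partition :: "nat \<Rightarrow> (nat \<Rightarrow> 'a set) \<Rightarrow> (nat \<Rightarrow> 'a) set \<Rightarrow> bool" where
  "linear_partition n Xs A \<longleftrightarrow>
     (\<forall>i\<in>{1..n}. \<forall>xi\<in>Xs i. \<forall>yi\<in>Xs i. pref n Xs A i xi yi \<or> pref n Xs A i yi xi)"

definition semiorder_on :: "'a set \<Rightarrow> ('a \<Rightarrow> 'a \<Rightarrow> bool) \<Rightarrow> bool" where
  "semiorder_on C R \<longleftrightarrow>
     (\<forall>x\<in>C. R x x) \<and>
     (\<forall>x\<in>C. \<forall>y\<in>C. \<forall>z\<in>C. \<forall>w\<in>C. R x y \<and> R z w \<longrightarrow> R x w \<or> R z y) \<and>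
     (\<forall>x\<in>C. \<forall>y\<in>C. \<forall>z\<in>C. \<forall>w\<in>C. R x y \<and> R y z \<longrightarrow> R x w \<or> R w z)"

definition Srel :: "nat \<Rightarrow> (nat \<Rightarrow> 'a \<Rightarrow> 'a \<Rightarrow> bool) \<Rightarrow> (nat \<Rightarrow> 'a) \<Rightarrow> (nat \<Rightarrow> 'a) \<Rightarrow> bool" where
  "Srel n S x y \<longleftrightarrow> (\<forall>i\<in>{1..n}. S i (x i) (y i))"

definition Prel :: "nat \<Rightarrow> (nat \<Rightarrow> 'a \<Rightarrow> 'a \<Rightarrow> bool) \<Rightarrow> (nat \<Rightarrow> 'a) \<Rightarrow> (nat \<Rightarrow> 'a) \<Rightarrow> bool" where
  "Prel n S x y \<longleftrightarrow> Srel n S x y \<and> \<not> Srel n S y x"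

definition rep_Fu :: "nat \<Rightarrow> (nat \<Rightarrow> 'a set) \<Rightarrow> (nat \<Rightarrow> 'a) set
    \<Rightarrow> (nat \<Rightarrow> 'a \<Rightarrow> 'a \<Rightarrow> bool) \<Rightarrow> (nat \<Rightarrow> 'a) set \<Rightarrow> bool" where
  "rep_Fu n Xs A S Pset \<longleftrightarrow>
     (\<forall>i\<in>{1..n}. semiorder_on (Xs i) (S i)) \<and>
     Pset \<subseteq> prodX n Xs \<and>
     (\<forall>p\<in>Pset. \<forall>q\<in>Pset. \<not> Prel n S p q) \<and>
     (\<forall>x\<in>prodX n Xs. x \<notin> A \<longleftrightarrow>
         ((\<exists>p\<in>Pset. Prel n S p x) \<and> (\<forall>q\<in>Pset. \<not> Prel n S x q)))"

definition model_Fu :: "nat \<Rightarrow> (nat \<Rightarrow> 'a set) \<Rightarrow> (nat \<Rightarrow> 'a) set \<Rightarrow> bool" where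
  "model_Fu n Xs A \<longleftrightarrow> (\<exists>S Pset. rep_Fu n Xs A S Pset)"

definition model_Fu_under :: "nat \<Rightarrow> (nat \<Rightarrow> 'a set) \<Rightarrow> (nat \<Rightarrow> 'a) set \<Rightarrow> bool" where
  "model_Fu_under n Xs A \<longleftrightarrow>
     (\<exists>S Pset. rep_Fu n Xs A S Pset \<and>
        (\<forall>i\<in>{1..n}. \<forall>xi\<in>Xs i. \<forall>yi\<in>Xs i. S i xi yi \<longleftrightarrow> pref n Xs A i xi yi))"

end

theory Submission
  imports Defs
begin

text \<open>A representation with \<open>S\<^sub>i = \<succsim>\<^sub>i\<close> is in particular a representation in Model \<open>F\<^sup>u\<close>,
  so the first half is immediate. For the counterexample take \<open>X\<^sub>1 = {0,1}\<close>, \<open>X\<^sub>2 = X\<^sub>3 = {0,1,2}\<close>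
  and \<open>\<A> = {x. x\<^sub>1 = 1 \<and> x\<^sub>2 + x\<^sub>3 \<ge> 2}\<close>, where every \<open>\<succsim>\<^sub>i\<close> is the natural order.
  Since the \<open>\<succsim>\<^sub>i\<close> are transitive, so is \<open>P\<close> in any \<open>F\<^sup>u\<close>-representation, and then every
  point strictly below a point of \<open>\<P>\<close> lies in \<open>\<U>\<close>. But \<open>(0,2,2) \<in> \<U>\<close> can only be strictly
  dominated by \<open>(1,2,2)\<close>, which also strictly dominates \<open>(1,0,2) \<in> \<A>\<close>. The intransitive
  semiorders \<open>b \<le> a + 1\<close> on the last two attributes escape this: they represent \<open>\<A>\<close>
  with \<open>\<P> = {(1,0,2), (1,1,1), (1,2,0)}\<close>.\<close>

lemma model_Fu_under_imp_model_Fu: "model_Fu_under n Xs A \<Longrightarrow> model_Fu n Xs A"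
  unfolding model_Fu_under_def model_Fu_def by blast

lemma transp_on_pref: "transp_on C (pref n Xs A i)"
  unfolding transp_on_def pref_def by blast

lemma Srel_trans:
  assumes "\<forall>i\<in>{1..n}. transp_on (Xs i) (S i)"
    and "x \<in> prodX n Xs" "y \<in> prodX n Xs" "z \<in> prodX n Xs"
    and "Srel n S x y" "Srel n S y z"
  shows "Srel n S x z"
  using assms unfolding Srel_def prodX_def by (meson PiE_mem transp_onD)

lemma Prel_trans:
  assumes "\<forall>i\<in>{1..n}. transp_on (Xs i) (S i)"
    and "x \<in> prodX n Xs" "y \<in> prodX n Xs" "z \<in> prodX n Xs"
    and "Prel n S x y" "Prel n S y z"
  shows "Prel n S x z"
  using assms Srel_trans[OF assms(1)] unfolding Prel_def by blast

lemma rep_Fu_below_P_not_in: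
  assumes rep: "rep_Fu n Xs A S Pset" and trans: "\<forall>i\<in>{1..n}. transp_on (Xs i) (S i)"
    and "p \<in> Pset" "Prel n S p y" "y \<in> prodX n Xs"
  shows "y \<notin> A"
proof
  assume "y \<in> A"
  with assms obtain q where q: "q \<in> Pset" "Prel n S y q"
    unfolding rep_Fu_def by blast
  with assms have "Prel n S p q"
    using Prel_trans[OF trans] unfolding rep_Fu_def by blast
  with q \<open>p \<in> Pset\<close> rep show False
    unfolding rep_Fu_def by blast
qed

lemma rep_Fu_under_below_P_not_in:
  assumes rep: "rep_Fu n Xs A S Pset"
    and S: "\<forall>i\<in>{1..n}. \<forall>u\<in>Xs i. \<forall>v\<in>Xs i. S i u v \<longleftrightarrow> pref n Xs A i u v"
    and "p \<in> Pset" "Prel n S p y" "y \<in> prodX n Xs"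
  shows "y \<notin> A"
proof -
  have "transp_on (Xs i) (S i)" if "i \<in> {1..n}" for i
  proof (rule transp_onI)
    fix u v w assume "u \<in> Xs i" "v \<in> Xs i" "w \<in> Xs i" "S i u v" "S i v w"
    with S that show "S i u w"
      using transp_onD[OF transp_on_pref] by metis
  qed
  with rep_Fu_below_P_not_in[OF rep] assms(3-) show ?thesis
    by blast
qed

definition Xs0 :: "nat \<Rightarrow> nat set" where
  "Xs0 i = (if i = 1 then {0,1} else {0,1,2})"

definition A0 :: "(nat \<Rightarrow> nat) set" where
  "A0 = {x \<in> prodX 3 Xs0. x 1 = 1 \<and> 2 \<le> x 2 + x 3}"

definition triple :: "nat \<Rightarrow> nat \<Rightarrow> nat \<Rightarrow> nat \<Rightarrow> nat" where
  "triple a b c = (\<lambda>i. if i = 1 then a else if i = 2 then b else if i = 3 then c else undefined)"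

definition S0 :: "nat \<Rightarrow> nat \<Rightarrow> nat \<Rightarrow> bool" where
  "S0 i a b \<longleftrightarrow> (if i = 1 then b \<le> a else b \<le> a + 1)"

definition P0 :: "(nat \<Rightarrow> nat) set" where
  "P0 = {triple 1 0 2, triple 1 1 1, triple 1 2 0}"

lemma atLeastAtMost_1_3: "{1..3::nat} = {1,2,3}"
  by auto

lemma mem_prodX_Xs0: "x \<in> prodX 3 Xs0 \<longleftrightarrow>
    x 1 \<in> {0,1} \<and> x 2 \<in> {0,1,2} \<and> x 3 \<in> {0,1,2} \<and> (\<forall>i. i \<notin> {1,2,3} \<longrightarrow> x i = undefined)"
  unfolding prodX_def PiE_iff extensional_def atLeastAtMost_1_3 Xs0_def by simp

lemma triple_in_prodX_Xs0: "triple a b c \<in> prodX 3 Xs0 \<longleftrightarrow> a \<in> {0,1} \<and> b \<in> {0,1,2} \<and> c \<in> {0,1,2}"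
  by (auto simp: mem_prodX_Xs0 triple_def)

lemma Srel_3: "Srel 3 S x y \<longleftrightarrow> S 1 (x 1) (y 1) \<and> S 2 (x 2) (y 2) \<and> S 3 (x 3) (y 3)"
  unfolding Srel_def atLeastAtMost_1_3 by simp

lemma pref_A0_if_ge:
  assumes i: "i \<in> {1..3}" and "u \<in> Xs0 i" "v \<le> u"
  shows "pref 3 Xs0 A0 i u v"
  unfolding pref_def
proof (intro ballI impI)
  fix a assume "a \<in> others 3 Xs0 i" "a(i := v) \<in> A0"
  moreover have "i = 1 \<or> i = 2 \<or> i = 3"
    using i by auto
  ultimately show "a(i := u) \<in> A0"
    using assms by (auto simp: A0_def Xs0_def prodX_def others_def PiE_iff extensional_def)
qed

lemma not_pref_A0_if_less:
  assumes i: "i \<in> {1..3}" and "u \<in> Xs0 i" "v \<in> Xs0 i" "u < v"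
  shows "\<not> pref 3 Xs0 A0 i u v"
proof -
  \<comment> \<open>One witness serves all three attributes: for \<open>i = 1\<close> we have \<open>v = 1\<close>, so \<open>2 - v = 1\<close>.\<close>
  define a :: "nat \<Rightarrow> nat" where
    "a = (\<lambda>j. if j = i then undefined else if j = 1 then 1 else if j \<in> {2,3} then 2 - v else undefined)"
  have "i = 1 \<or> i = 2 \<or> i = 3"
    using i by auto
  then have "a \<in> others 3 Xs0 i" "a(i := v) \<in> A0" "a(i := u) \<notin> A0"
    using assms by (auto simp: a_def others_def PiE_iff extensional_def Xs0_def A0_def mem_prodX_Xs0)
  then show ?thesis
    unfolding pref_def by blast
qed

lemma pref_A0_iff:
  assumes "i \<in> {1..3}" "u \<in> Xs0 i" "v \<in> Xs0 i"
  shows "pref 3 Xs0 A0 i u v \<longleftrightarrow> v \<le> u"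
  using pref_A0_if_ge[OF assms(1,2)] not_pref_A0_if_less[OF assms] by force

lemma standing_A0: "standing 3 Xs0 A0"
proof -
  have "\<exists>xi\<in>Xs0 i. \<exists>yi\<in>Xs0 i. \<exists>a\<in>others 3 Xs0 i. a(i := xi) \<in> A0 \<and> a(i := yi) \<notin> A0"
    if i: "i \<in> {1..3}" for i
  proof -
    have "0 \<in> Xs0 i" "1 \<in> Xs0 i"
      by (auto simp: Xs0_def)
    with not_pref_A0_if_less[OF i] show ?thesis
      unfolding pref_def by fastforce
  qed
  moreover have "A0 \<subseteq> prodX 3 Xs0"
    by (auto simp: A0_def)
  ultimately show ?thesis
    unfolding standing_def twofold_partition_def using pref_A0_iff by (auto simp: Xs0_def)
qed

lemma linear_partition_A0: "linear_partition 3 Xs0 A0"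
  unfolding linear_partition_def using pref_A0_iff by fastforce

lemma rep_Fu_A0: "rep_Fu 3 Xs0 A0 S0 P0"
  unfolding rep_Fu_def
proof (intro conjI ballI)
  show "semiorder_on (Xs0 i) (S0 i)" for i
    unfolding semiorder_on_def S0_def by auto
  show "P0 \<subseteq> prodX 3 Xs0"
    by (auto simp: P0_def triple_in_prodX_Xs0)
  show "\<not> Prel 3 S0 p q" if "p \<in> P0" "q \<in> P0" for p q
    using that by (auto simp: P0_def Prel_def Srel_3 triple_def S0_def)
  fix x assume "x \<in> prodX 3 Xs0"
  then have "x \<in> A0 \<longleftrightarrow> x 1 = 1 \<and> 2 \<le> x 2 + x 3"
    and "x 1 = 0 \<or> x 1 = 1" "x 2 = 0 \<or> x 2 = 1 \<or> x 2 = 2" "x 3 = 0 \<or> x 3 = 1 \<or> x 3 = 2"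
    by (auto simp: A0_def mem_prodX_Xs0)
  then show "x \<notin> A0 \<longleftrightarrow> (\<exists>p\<in>P0. Prel 3 S0 p x) \<and> (\<forall>q\<in>P0. \<not> Prel 3 S0 x q)"
    unfolding P0_def Prel_def Srel_3 by (elim disjE; simp add: triple_def S0_def)
qed

lemma not_model_Fu_under_A0: "\<not> model_Fu_under 3 Xs0 A0"
proof
  assume "model_Fu_under 3 Xs0 A0"
  then obtain S P where rep: "rep_Fu 3 Xs0 A0 S P"
    and S_pref: "\<forall>i\<in>{1..3}. \<forall>u\<in>Xs0 i. \<forall>v\<in>Xs0 i. S i u v \<longleftrightarrow> pref 3 Xs0 A0 i u v"
    unfolding model_Fu_under_def by blast
  have Srel_iff: "Srel 3 S u v \<longleftrightarrow> v 1 \<le> u 1 \<and> v 2 \<le> u 2 \<and> v 3 \<le> u 3"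
    if "u \<in> prodX 3 Xs0" "v \<in> prodX 3 Xs0" for u v
  proof -
    have "S i (u i) (v i) \<longleftrightarrow> v i \<le> u i" if "i \<in> {1..3}" for i
      using \<open>u \<in> prodX 3 Xs0\<close> \<open>v \<in> prodX 3 Xs0\<close> that S_pref pref_A0_iff
      by (simp add: prodX_def PiE_iff)
    then show ?thesis
      unfolding Srel_3 by simp
  qed
  have P_sub: "P \<subseteq> prodX 3 Xs0"
    and U_iff: "\<And>x. x \<in> prodX 3 Xs0 \<Longrightarrow> x \<notin> A0 \<longleftrightarrow> (\<exists>p\<in>P. Prel 3 S p x) \<and> (\<forall>q\<in>P. \<not> Prel 3 S x q)"
    using rep unfolding rep_Fu_def by simp_all
  let ?x = "triple 0 2 2" and ?y = "triple 1 0 2"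
  have x: "?x \<in> prodX 3 Xs0" "?x \<notin> A0" and y: "?y \<in> prodX 3 Xs0" "?y \<in> A0"
    by (simp_all add: triple_in_prodX_Xs0 A0_def) (simp_all add: triple_def)
  then obtain p where p: "p \<in> P" "Prel 3 S p ?x"
    using U_iff by blast
  then have pX: "p \<in> prodX 3 Xs0"
    using P_sub by blast
  with p(2) have "p 1 = 1" "p 2 = 2" "p 3 = 2"
    unfolding Prel_def Srel_iff[OF pX x(1)] Srel_iff[OF x(1) pX] by (auto simp: mem_prodX_Xs0 triple_def)
  then have "Prel 3 S p ?y"
    unfolding Prel_def Srel_iff[OF pX y(1)] Srel_iff[OF y(1) pX] by (simp add: triple_def)
  with rep_Fu_under_below_P_not_in[OF rep S_pref p(1)] y show False
    by blast
qed

theorem proposition4: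
  shows "(\<forall>(n::nat) (Xs :: nat \<Rightarrow> 'a set) A.
            standing n Xs A \<and> model_Fu_under n Xs A \<longrightarrow> model_Fu n Xs A)
       \<and> (\<exists>(n::nat) (Xs :: nat \<Rightarrow> nat set) A.
            standing n Xs A \<and> linear_partition n Xs A \<and>
            model_Fu n Xs A \<and> \<not> model_Fu_under n Xs A)"
proof
  show "\<forall>(n::nat) (Xs :: nat \<Rightarrow> 'a set) A.
            standing n Xs A \<and> model_Fu_under n Xs A \<longrightarrow> model_Fu n Xs A"
    using model_Fu_under_imp_model_Fu by blast
  have "model_Fu 3 Xs0 A0"
    unfolding model_Fu_def using rep_Fu_A0 by blast
  then show "\<exists>(n::nat) (Xs :: nat \<Rightarrow> nat set) A.
            standing n Xs A \<and> linear_partition n Xs A \<and>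
            model_Fu n Xs A \<and> \<not> model_Fu_under n Xs A"
    using standing_A0 linear_partition_A0 not_model_Fu_under_A0 by blast
qed

end
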